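(* Let $Q \ll P$ be probability measures on a Polish space $\mathcal{X}$ with $r = dQ/dP$ and $L = D_{KL}(Q\|P) < \infty$. Let $\varphi \in L^2(Q)$, let $t \ge 0$ be such that $n = 2^{L+t}$ is a positive integer, and let $X_1, \dots, X_n$ be i.i.d. $P$-distributed. Define $I(\varphi) = \int_{\mathcal{X}} \varphi\, dQ$ and $I_n(\varphi) = \frac{1}{n}\sum_{i=1}^n \varphi(X_i) r(X_i)$. Then $$\mathbb{E}\big[|I_n(\varphi) - I(\varphi)|\big] \le \|\varphi\|_{L^2(Q)}\Big(2^{-t/4} + 2\sqrt{S_P(2^{L+t/2})}\Big).$$
   Context: $D_{KL}(Q\|P) = \mathbb{E}_{X\sim Q}[\log_2 r(X)]$. Define $w_P(h) = \mathbb{P}_{X\sim P}[r(X) \ge h]$, $W_P(h) = \int_0^h w_P(\eta)\,d\eta$ and $S_P(h) = 1 - W_P(h)$. *)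

theory Defs
  imports "HOL-Probability.Probability"
begin

text \<open>Density ratio r = dQ/dP (real-valued version of the Radon-Nikodym derivative).\<close>
definition rdens :: "'a measure \<Rightarrow> 'a measure \<Rightarrow> 'a \<Rightarrow> real" where
  "rdens P Q = (\<lambda>x. enn2real (RN_deriv P Q x))"

definition wP :: "'a measure \<Rightarrow> 'a measure \<Rightarrow> real \<Rightarrow> real" where
  "wP P Q h = measure P {x \<in> space P. rdens P Q x \<ge> h}"

definition WP :: "'a measure \<Rightarrow> 'a measure \<Rightarrow> real \<Rightarrow> real" where
  "WP P Q h = (LBINT \<eta>=0..h. wP P Q \<eta>)"

definition SP :: "'a measure \<Rightarrow> 'a measure \<Rightarrow> real \<Rightarrow> real" where
  "SP P Q h = 1 - WP P Q h"

end

theory Submission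
  imports Defs
begin

text \<open>
Write r = dQ/dP and truncate the weight at level a = 2 powr (L + t/2): phi r = g + e with
g = phi min(r, a) and e = phi (r - a)_+. The truncated part has second moment
E_P g^2 <= a E_Q phi^2, so by independence and Cauchy-Schwarz the sample mean of g deviates
from its expectation by at most sqrt (a E_Q phi^2 / n) = ||phi|| 2 powr (-t/4) in L^1.
The tail part costs at most 2 E_P |e|, and Cauchy-Schwarz with the weight (r - a)_+ <= r bounds
this by 2 ||phi|| sqrt (E_P (r - a)_+); by the layer-cake formula E_P (r - a)_+ = 1 - E_P min(r, a)
is S_P(a).
\<close>

definition sample_mean :: "nat \<Rightarrow> ('a \<Rightarrow> real) \<Rightarrow> (nat \<Rightarrow> 'a) \<Rightarrow> real" where
  "sample_mean n f \<omega> = (\<Sum>i<n. f (\<omega> i)) / real n"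

lemma sample_mean_add:
  "sample_mean n (\<lambda>x. f x + g x) \<omega> = sample_mean n f \<omega> + sample_mean n g \<omega>"
  by (simp add: sample_mean_def sum.distrib add_divide_distrib)

lemma abs_sample_mean_le: "\<bar>sample_mean n f \<omega>\<bar> \<le> sample_mean n (\<lambda>x. \<bar>f x\<bar>) \<omega>"
  by (simp add: sample_mean_def divide_right_mono sum_abs)

lemma Cauchy_Schwarz_integral:
  fixes f g :: "'a \<Rightarrow> real"
  assumes [measurable]: "f \<in> borel_measurable M" "g \<in> borel_measurable M"
    and f2: "integrable M (\<lambda>x. (f x)\<^sup>2)" and g2: "integrable M (\<lambda>x. (g x)\<^sup>2)"
  shows "(\<integral>x. \<bar>f x * g x\<bar> \<partial>M) \<le> sqrt (\<integral>x. (f x)\<^sup>2 \<partial>M) * sqrt (\<integral>x. (g x)\<^sup>2 \<partial>M)"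
proof -
  have fg: "integrable M (\<lambda>x. \<bar>f x * g x\<bar>)"
  proof (rule Bochner_Integration.integrable_bound)
    show "integrable M (\<lambda>x. ((f x)\<^sup>2 + (g x)\<^sup>2) / 2)"
      using f2 g2 by simp
    have "\<bar>f x * g x\<bar> \<le> ((f x)\<^sup>2 + (g x)\<^sup>2) / 2" for x
      using sum_squares_bound[of "\<bar>f x\<bar>" "\<bar>g x\<bar>"] by (simp add: abs_mult field_simps)
    then show "AE x in M. norm \<bar>f x * g x\<bar> \<le> norm (((f x)\<^sup>2 + (g x)\<^sup>2) / 2)"
      by (simp add: abs_le_iff)
  qed measurable
  have nn: "(\<integral>\<^sup>+x. ennreal (h x) \<partial>M) = ennreal (\<integral>x. h x \<partial>M)"
    if "integrable M h" "\<And>x. h x \<ge> 0" for h :: "'a \<Rightarrow> real"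
    using that by (intro nn_integral_eq_integral) auto
  have nonneg: "0 \<le> (\<integral>x. (f x)\<^sup>2 \<partial>M) * (\<integral>x. (g x)\<^sup>2 \<partial>M)"
    by (intro mult_nonneg_nonneg integral_nonneg_AE) auto
  have "ennreal ((\<integral>x. \<bar>f x * g x\<bar> \<partial>M)\<^sup>2) = (\<integral>\<^sup>+x. ennreal \<bar>f x\<bar> * ennreal \<bar>g x\<bar> \<partial>M)\<^sup>2"
    using nn[OF fg] by (simp add: ennreal_power abs_mult ennreal_mult)
  also have "\<dots> \<le> (\<integral>\<^sup>+x. (ennreal \<bar>f x\<bar>)\<^sup>2 \<partial>M) * (\<integral>\<^sup>+x. (ennreal \<bar>g x\<bar>)\<^sup>2 \<partial>M)"
    by (rule Cauchy_Schwarz_nn_integral) auto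
  also have "\<dots> = ennreal ((\<integral>x. (f x)\<^sup>2 \<partial>M) * (\<integral>x. (g x)\<^sup>2 \<partial>M))"
    using nn[OF f2] nn[OF g2] by (simp add: ennreal_power ennreal_mult)
  finally have "(\<integral>x. \<bar>f x * g x\<bar> \<partial>M)\<^sup>2 \<le> (\<integral>x. (f x)\<^sup>2 \<partial>M) * (\<integral>x. (g x)\<^sup>2 \<partial>M)"
    using nonneg by simp
  then have "sqrt ((\<integral>x. \<bar>f x * g x\<bar> \<partial>M)\<^sup>2) \<le> sqrt ((\<integral>x. (f x)\<^sup>2 \<partial>M) * (\<integral>x. (g x)\<^sup>2 \<partial>M))"
    by (rule real_sqrt_le_mono)
  moreover have "0 \<le> (\<integral>x. \<bar>f x * g x\<bar> \<partial>M)"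
    by (rule integral_nonneg_AE) simp
  ultimately show ?thesis
    by (simp add: real_sqrt_mult)
qed

lemma (in prob_space)
  fixes f :: "'a \<Rightarrow> real"
  assumes "i \<in> I" "integrable M f"
  shows integrable_PiM_component: "integrable (PiM I (\<lambda>_. M)) (\<lambda>\<omega>. f (\<omega> i))"
    and integral_PiM_component: "(\<integral>\<omega>. f (\<omega> i) \<partial>PiM I (\<lambda>_. M)) = (\<integral>x. f x \<partial>M)"
proof -
  interpret P: product_prob_space "\<lambda>_. M" I by unfold_locales
  have distr: "distr (PiM I (\<lambda>_. M)) M (\<lambda>\<omega>. \<omega> i) = M"
    using P.PiM_component[OF \<open>i \<in> I\<close>] by simp
  have [measurable]: "(\<lambda>\<omega>. \<omega> i) \<in> measurable (PiM I (\<lambda>_. M)) M" "f \<in> borel_measurable M"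
    using assms by (auto intro: measurable_component_singleton[where M = "\<lambda>_. M", simplified])
  show "integrable (PiM I (\<lambda>_. M)) (\<lambda>\<omega>. f (\<omega> i))"
    using integrable_distr_eq[of "\<lambda>\<omega>. \<omega> i" "PiM I (\<lambda>_. M)" M f] assms(2) by (simp add: distr)
  show "(\<integral>\<omega>. f (\<omega> i) \<partial>PiM I (\<lambda>_. M)) = (\<integral>x. f x \<partial>M)"
    using integral_distr[of "\<lambda>\<omega>. \<omega> i" "PiM I (\<lambda>_. M)" M f] by (simp add: distr)
qed

lemma (in prob_space)
  fixes f g :: "'a \<Rightarrow> real"
  assumes "finite I" "i \<in> I" "j \<in> I" "i \<noteq> j" "integrable M f" "integrable M g"
  shows integrable_PiM_two_components: "integrable (PiM I (\<lambda>_. M)) (\<lambda>\<omega>. f (\<omega> i) * g (\<omega> j))"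
    and integral_PiM_two_components:
      "(\<integral>\<omega>. f (\<omega> i) * g (\<omega> j) \<partial>PiM I (\<lambda>_. M)) = (\<integral>x. f x \<partial>M) * (\<integral>x. g x \<partial>M)"
proof -
  interpret P: product_prob_space "\<lambda>_. M" I by unfold_locales
  define F where "F k = (if k = i then f else if k = j then g else (\<lambda>_. 1))" for k
  have F_integrable: "integrable M (F k)" for k
    using assms by (simp add: F_def)
  have ij: "{i, j} \<subseteq> I" and outside: "\<forall>k \<in> I - {i, j}. F k = (\<lambda>_. 1)"
    using assms by (auto simp: F_def)
  have "(\<Prod>k\<in>I. F k (\<omega> k)) = (\<Prod>k\<in>{i, j}. F k (\<omega> k))" for \<omega>
    using \<open>finite I\<close> ij outside by (intro prod.mono_neutral_right) auto
  then have prod: "(\<Prod>k\<in>I. F k (\<omega> k)) = f (\<omega> i) * g (\<omega> j)" for \<omega>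
    using \<open>i \<noteq> j\<close> by (simp add: F_def)
  have "(\<Prod>k\<in>I. \<integral>x. F k x \<partial>M) = (\<Prod>k\<in>{i, j}. \<integral>x. F k x \<partial>M)"
    using \<open>finite I\<close> ij outside by (intro prod.mono_neutral_right) (auto simp: prob_space)
  then have integral_prod: "(\<Prod>k\<in>I. \<integral>x. F k x \<partial>M) = (\<integral>x. f x \<partial>M) * (\<integral>x. g x \<partial>M)"
    using \<open>i \<noteq> j\<close> by (simp add: F_def)
  show "integrable (PiM I (\<lambda>_. M)) (\<lambda>\<omega>. f (\<omega> i) * g (\<omega> j))"
    using P.product_integrable_prod[of I F, OF \<open>finite I\<close> F_integrable] by (simp add: prod)
  show "(\<integral>\<omega>. f (\<omega> i) * g (\<omega> j) \<partial>PiM I (\<lambda>_. M)) = (\<integral>x. f x \<partial>M) * (\<integral>x. g x \<partial>M)"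
    using P.product_integral_prod[of I F, OF \<open>finite I\<close> F_integrable] by (simp add: prod integral_prod)
qed

lemma (in prob_space)
  fixes f :: "'a \<Rightarrow> real"
  assumes "integrable M f"
  shows integrable_sample_mean: "integrable (PiM {..<n} (\<lambda>_. M)) (sample_mean n f)"
    and integral_sample_mean: "n > 0 \<Longrightarrow> (\<integral>\<omega>. sample_mean n f \<omega> \<partial>PiM {..<n} (\<lambda>_. M)) = (\<integral>x. f x \<partial>M)"
proof -
  have components: "\<And>i. i \<in> {..<n} \<Longrightarrow> integrable (PiM {..<n} (\<lambda>_. M)) (\<lambda>\<omega>. f (\<omega> i))"
    by (rule integrable_PiM_component[OF _ assms])
  show "integrable (PiM {..<n} (\<lambda>_. M)) (sample_mean n f)"
    unfolding sample_mean_def[abs_def] using components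
    by (rule integrable_divide[OF Bochner_Integration.integrable_sum])
  show "(\<integral>\<omega>. sample_mean n f \<omega> \<partial>PiM {..<n} (\<lambda>_. M)) = (\<integral>x. f x \<partial>M)" if "n > 0"
    unfolding sample_mean_def using components that
    by (simp add: Bochner_Integration.integral_sum integral_PiM_component[OF _ assms])
qed

lemma (in prob_space) integrable_abs_sample_mean_deviation:
  fixes f :: "'a \<Rightarrow> real"
  assumes "integrable M f"
  shows "integrable (PiM {..<n} (\<lambda>_. M)) (\<lambda>\<omega>. \<bar>sample_mean n f \<omega> - c\<bar>)"
proof -
  interpret P: product_prob_space "\<lambda>_. M" "{..<n}" by unfold_locales
  show ?thesis
    using assms by (intro integrable_abs Bochner_Integration.integrable_diff integrable_sample_mean) auto
qed

lemma (in prob_space)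
  fixes f :: "'a \<Rightarrow> real"
  assumes "finite I" "i \<in> I" "j \<in> I" and [measurable]: "f \<in> borel_measurable M"
    and f2: "integrable M (\<lambda>x. (f x)\<^sup>2)" and mean_zero: "(\<integral>x. f x \<partial>M) = 0"
  shows integrable_PiM_components_mult: "integrable (PiM I (\<lambda>_. M)) (\<lambda>\<omega>. f (\<omega> i) * f (\<omega> j))"
    and integral_PiM_centered_components_mult:
      "(\<integral>\<omega>. f (\<omega> i) * f (\<omega> j) \<partial>PiM I (\<lambda>_. M)) = (if i = j then \<integral>x. (f x)\<^sup>2 \<partial>M else 0)"
proof -
  have f: "integrable M f"
    using f2 by (rule square_integrable_imp_integrable[rotated]) measurable
  show "integrable (PiM I (\<lambda>_. M)) (\<lambda>\<omega>. f (\<omega> i) * f (\<omega> j))"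
  proof (cases "i = j")
    case True
    then show ?thesis
      using integrable_PiM_component[OF \<open>j \<in> I\<close> f2] by (simp add: power2_eq_square)
  qed (use integrable_PiM_two_components[OF assms(1-3) _ f f] in simp)
  show "(\<integral>\<omega>. f (\<omega> i) * f (\<omega> j) \<partial>PiM I (\<lambda>_. M)) = (if i = j then \<integral>x. (f x)\<^sup>2 \<partial>M else 0)"
  proof (cases "i = j")
    case True
    then show ?thesis
      using integral_PiM_component[OF \<open>j \<in> I\<close> f2] by (simp add: power2_eq_square)
  qed (use integral_PiM_two_components[OF assms(1-3) _ f f] mean_zero in simp)
qed

lemma (in prob_space)
  fixes f :: "'a \<Rightarrow> real"
  assumes "n > 0" and [measurable]: "f \<in> borel_measurable M"
    and f2: "integrable M (\<lambda>x. (f x)\<^sup>2)" and mean_zero: "(\<integral>x. f x \<partial>M) = 0"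
  shows integrable_sample_mean_square:
      "integrable (PiM {..<n} (\<lambda>_. M)) (\<lambda>\<omega>. (sample_mean n f \<omega>)\<^sup>2)"
    and integral_sample_mean_square:
      "(\<integral>\<omega>. (sample_mean n f \<omega>)\<^sup>2 \<partial>PiM {..<n} (\<lambda>_. M)) = (\<integral>x. (f x)\<^sup>2 \<partial>M) / n"
proof -
  let ?M = "PiM {..<n} (\<lambda>_. M)"
  note integrable_products = integrable_PiM_components_mult[OF finite_lessThan _ _ _ f2 mean_zero]
    and integral_products = integral_PiM_centered_components_mult[OF finite_lessThan _ _ _ f2 mean_zero]
  have square: "(sample_mean n f \<omega>)\<^sup>2 = (\<Sum>i<n. \<Sum>j<n. f (\<omega> i) * f (\<omega> j)) / (real n)\<^sup>2" for \<omega>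
    by (simp add: sample_mean_def power2_eq_square sum_product)
  show "integrable ?M (\<lambda>\<omega>. (sample_mean n f \<omega>)\<^sup>2)"
    unfolding square
    by (intro integrable_divide Bochner_Integration.integrable_sum integrable_products) auto
  have row: "(\<integral>\<omega>. (\<Sum>j<n. f (\<omega> i) * f (\<omega> j)) \<partial>?M) = (\<integral>x. (f x)\<^sup>2 \<partial>M)" if "i < n" for i
  proof -
    have "(\<integral>\<omega>. (\<Sum>j<n. f (\<omega> i) * f (\<omega> j)) \<partial>?M) = (\<Sum>j<n. \<integral>\<omega>. f (\<omega> i) * f (\<omega> j) \<partial>?M)"
      using that by (intro Bochner_Integration.integral_sum integrable_products) auto
    also have "\<dots> = (\<Sum>j<n. if i = j then \<integral>x. (f x)\<^sup>2 \<partial>M else 0)"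
      using that by (intro sum.cong refl integral_products) auto
    also have "\<dots> = (\<integral>x. (f x)\<^sup>2 \<partial>M)"
      using that by simp
    finally show ?thesis .
  qed
  have "(\<integral>\<omega>. (sample_mean n f \<omega>)\<^sup>2 \<partial>?M) = (\<Sum>i<n. \<integral>\<omega>. (\<Sum>j<n. f (\<omega> i) * f (\<omega> j)) \<partial>?M) / (real n)\<^sup>2"
    unfolding square integral_divide_zero
    by (intro arg_cong[where f = "\<lambda>x. x / (real n)\<^sup>2"] Bochner_Integration.integral_sum
        Bochner_Integration.integrable_sum integrable_products) auto
  also have "\<dots> = (\<Sum>i<n. \<integral>x. (f x)\<^sup>2 \<partial>M) / (real n)\<^sup>2"
    by (intro arg_cong[where f = "\<lambda>x. x / (real n)\<^sup>2"] sum.cong refl row) simp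
  also have "\<dots> = (\<integral>x. (f x)\<^sup>2 \<partial>M) / n"
    using \<open>n > 0\<close> by (simp add: power2_eq_square)
  finally show "(\<integral>\<omega>. (sample_mean n f \<omega>)\<^sup>2 \<partial>?M) = (\<integral>x. (f x)\<^sup>2 \<partial>M) / n" .
qed

lemma (in prob_space) integral_abs_sample_mean_deviation_le:
  fixes f :: "'a \<Rightarrow> real"
  assumes "n > 0" and [measurable]: "f \<in> borel_measurable M"
    and f2: "integrable M (\<lambda>x. (f x)\<^sup>2)"
  shows "(\<integral>\<omega>. \<bar>sample_mean n f \<omega> - (\<integral>x. f x \<partial>M)\<bar> \<partial>PiM {..<n} (\<lambda>_. M))
      \<le> sqrt ((\<integral>x. (f x)\<^sup>2 \<partial>M) / n)"
proof -
  let ?M = "PiM {..<n} (\<lambda>_. M)"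
  interpret P: product_prob_space "\<lambda>_. M" "{..<n}" by unfold_locales
  have f: "integrable M f"
    using f2 by (rule square_integrable_imp_integrable[rotated]) measurable
  define g where "g x = f x - (\<integral>x. f x \<partial>M)" for x
  have [measurable]: "g \<in> borel_measurable M"
    unfolding g_def by measurable
  have g2: "integrable M (\<lambda>x. (g x)\<^sup>2)"
    unfolding g_def power2_diff using f f2 by simp
  have "(\<integral>x. g x \<partial>M) = 0"
    unfolding g_def using f by (simp add: prob_space)
  note mean_square = integrable_sample_mean_square[OF \<open>n > 0\<close> _ g2 this]
    integral_sample_mean_square[OF \<open>n > 0\<close> _ g2 this]
  have variance: "(\<integral>x. (g x)\<^sup>2 \<partial>M) \<le> (\<integral>x. (f x)\<^sup>2 \<partial>M)"
    using variance_eq[OF f f2] unfolding g_def by simp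
  have deviation: "sample_mean n f \<omega> - (\<integral>x. f x \<partial>M) = sample_mean n g \<omega>" for \<omega>
    using \<open>n > 0\<close> by (simp add: sample_mean_def g_def sum_subtractf diff_divide_distrib)
  have "(\<integral>\<omega>. \<bar>sample_mean n g \<omega> * 1\<bar> \<partial>?M)
      \<le> sqrt (\<integral>\<omega>. (sample_mean n g \<omega>)\<^sup>2 \<partial>?M) * sqrt (\<integral>\<omega>. 1\<^sup>2 \<partial>?M)"
    using mean_square(1) by (intro Cauchy_Schwarz_integral) (auto simp: sample_mean_def[abs_def])
  also have "\<dots> = sqrt ((\<integral>x. (g x)\<^sup>2 \<partial>M) / n)"
    by (simp add: mean_square(2) P.P.prob_space)
  also have "\<dots> \<le> sqrt ((\<integral>x. (f x)\<^sup>2 \<partial>M) / n)"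
    using variance by (simp add: divide_right_mono)
  finally show ?thesis
    by (simp add: deviation)
qed

lemma (in prob_space) integral_abs_sample_mean_deviation_add_le:
  fixes g e :: "'a \<Rightarrow> real"
  assumes "n > 0" and g: "integrable M g" and e: "integrable M e"
  shows "(\<integral>\<omega>. \<bar>sample_mean n (\<lambda>x. g x + e x) \<omega> - (\<integral>x. g x + e x \<partial>M)\<bar> \<partial>PiM {..<n} (\<lambda>_. M))
      \<le> (\<integral>\<omega>. \<bar>sample_mean n g \<omega> - (\<integral>x. g x \<partial>M)\<bar> \<partial>PiM {..<n} (\<lambda>_. M)) + 2 * (\<integral>x. \<bar>e x\<bar> \<partial>M)"
proof -
  let ?M = "PiM {..<n} (\<lambda>_. M)"
  interpret P: product_prob_space "\<lambda>_. M" "{..<n}" by unfold_locales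
  have abs_e: "integrable M (\<lambda>x. \<bar>e x\<bar>)"
    using e by simp
  have pointwise: "\<bar>sample_mean n (\<lambda>x. g x + e x) \<omega> - (\<integral>x. g x + e x \<partial>M)\<bar>
      \<le> \<bar>sample_mean n g \<omega> - (\<integral>x. g x \<partial>M)\<bar> + sample_mean n (\<lambda>x. \<bar>e x\<bar>) \<omega> + (\<integral>x. \<bar>e x\<bar> \<partial>M)" for \<omega>
    using abs_sample_mean_le[of n e \<omega>] integral_abs_bound[of M e] g e
    by (simp add: sample_mean_add del: integral_abs_bound)
  have "(\<integral>\<omega>. \<bar>sample_mean n (\<lambda>x. g x + e x) \<omega> - (\<integral>x. g x + e x \<partial>M)\<bar> \<partial>?M)
      \<le> (\<integral>\<omega>. \<bar>sample_mean n g \<omega> - (\<integral>x. g x \<partial>M)\<bar> + sample_mean n (\<lambda>x. \<bar>e x\<bar>) \<omega> + (\<integral>x. \<bar>e x\<bar> \<partial>M) \<partial>?M)"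
    using g e abs_e pointwise
    by (intro integral_mono integrable_abs_sample_mean_deviation Bochner_Integration.integrable_add
        integrable_sample_mean) auto
  also have "\<dots> = (\<integral>\<omega>. \<bar>sample_mean n g \<omega> - (\<integral>x. g x \<partial>M)\<bar> \<partial>?M) + 2 * (\<integral>x. \<bar>e x\<bar> \<partial>M)"
    using g abs_e \<open>n > 0\<close> by (simp add: integrable_sample_mean integral_sample_mean P.P.prob_space)
  finally show ?thesis .
qed

lemma integrable_mult_of_weighted_square:
  fixes r f :: "'a \<Rightarrow> real"
  assumes [measurable]: "r \<in> borel_measurable M" "f \<in> borel_measurable M"
    and r_nonneg: "\<And>x. r x \<ge> 0" and r: "integrable M r" and rf2: "integrable M (\<lambda>x. r x * (f x)\<^sup>2)"
  shows "integrable M (\<lambda>x. f x * r x)"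
proof (rule Bochner_Integration.integrable_bound)
  show "integrable M (\<lambda>x. r x * (f x)\<^sup>2 + r x)"
    using r rf2 by simp
  have "\<bar>f x\<bar> \<le> (f x)\<^sup>2 + 1" for x
    using sum_squares_bound[of "\<bar>f x\<bar>" 1] by (simp add: field_simps)
  then have fr_le: "\<bar>f x * r x\<bar> \<le> r x * (f x)\<^sup>2 + r x" for x
    using mult_left_mono[of "\<bar>f x\<bar>" "(f x)\<^sup>2 + 1" "r x"] r_nonneg[of x]
    by (simp add: abs_mult distrib_left mult_ac)
  show "AE x in M. norm (f x * r x) \<le> norm (r x * (f x)\<^sup>2 + r x)"
    by (intro AE_I2) (simp add: order_trans[OF fr_le abs_ge_self])
qed measurable

lemma
  fixes r f :: "'a \<Rightarrow> real" and a :: real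
  assumes [measurable]: "r \<in> borel_measurable M" "f \<in> borel_measurable M"
    and r_nonneg: "\<And>x. r x \<ge> 0" and "a \<ge> 0" and rf2: "integrable M (\<lambda>x. r x * (f x)\<^sup>2)"
  shows integrable_truncated_square: "integrable M (\<lambda>x. (f x * min (r x) a)\<^sup>2)"
    and integral_truncated_square_le: "(\<integral>x. (f x * min (r x) a)\<^sup>2 \<partial>M) \<le> a * (\<integral>x. r x * (f x)\<^sup>2 \<partial>M)"
proof -
  have square_le: "(f x * min (r x) a)\<^sup>2 \<le> a * (r x * (f x)\<^sup>2)" for x
  proof -
    have "(min (r x) a)\<^sup>2 \<le> a * r x"
      using mult_mono[of "min (r x) a" a "min (r x) a" "r x"] r_nonneg[of x] \<open>a \<ge> 0\<close>
      by (simp add: power2_eq_square)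
    then have "(f x)\<^sup>2 * (min (r x) a)\<^sup>2 \<le> (f x)\<^sup>2 * (a * r x)"
      by (rule mult_left_mono) simp
    then show ?thesis
      by (simp add: power_mult_distrib mult_ac)
  qed
  show square_int: "integrable M (\<lambda>x. (f x * min (r x) a)\<^sup>2)"
  proof (rule Bochner_Integration.integrable_bound)
    show "integrable M (\<lambda>x. a * (r x * (f x)\<^sup>2))"
      using rf2 by simp
    show "AE x in M. norm ((f x * min (r x) a)\<^sup>2) \<le> norm (a * (r x * (f x)\<^sup>2))"
      using order_trans[OF square_le abs_ge_self] by (intro AE_I2) simp
  qed measurable
  have "(\<integral>x. (f x * min (r x) a)\<^sup>2 \<partial>M) \<le> (\<integral>x. a * (r x * (f x)\<^sup>2) \<partial>M)"
    using square_int rf2 square_le by (intro integral_mono) auto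
  then show "(\<integral>x. (f x * min (r x) a)\<^sup>2 \<partial>M) \<le> a * (\<integral>x. r x * (f x)\<^sup>2 \<partial>M)"
    by simp
qed

lemma integral_abs_mult_excess_le:
  fixes r f :: "'a \<Rightarrow> real" and a :: real
  assumes [measurable]: "r \<in> borel_measurable M" "f \<in> borel_measurable M"
    and r_nonneg: "\<And>x. r x \<ge> 0" and "a \<ge> 0"
    and r: "integrable M r" and rf2: "integrable M (\<lambda>x. r x * (f x)\<^sup>2)"
  shows "(\<integral>x. \<bar>f x * max (r x - a) 0\<bar> \<partial>M)
      \<le> sqrt (\<integral>x. r x * (f x)\<^sup>2 \<partial>M) * sqrt (\<integral>x. max (r x - a) 0 \<partial>M)"
proof -
  define p where "p x = max (r x - a) 0" for x
  have p: "0 \<le> p x" "p x \<le> r x" for x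
    unfolding p_def using r_nonneg[of x] \<open>a \<ge> 0\<close> by auto
  have [measurable]: "p \<in> borel_measurable M"
    unfolding p_def by measurable
  have p_int: "integrable M p"
    using p r_nonneg by (intro Bochner_Integration.integrable_bound[OF r]) (auto simp: abs_of_nonneg)
  have pf2_le: "p x * (f x)\<^sup>2 \<le> r x * (f x)\<^sup>2" for x
    using p by (simp add: mult_right_mono)
  have "norm (p x * (f x)\<^sup>2) \<le> norm (r x * (f x)\<^sup>2)" for x
    using pf2_le[of x] p[of x] r_nonneg[of x] by (simp add: abs_of_nonneg)
  then have pf2: "integrable M (\<lambda>x. p x * (f x)\<^sup>2)"
    by (intro Bochner_Integration.integrable_bound[OF rf2] AE_I2) auto
  have sqrt_p: "(sqrt (p x))\<^sup>2 = p x" "(sqrt (p x) * f x)\<^sup>2 = p x * (f x)\<^sup>2" for x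
    using p by (simp_all add: power_mult_distrib)
  have sqrt_factor: "f x * p x = sqrt (p x) * f x * sqrt (p x)" for x
    using sqrt_p(1)[of x] by (simp add: power2_eq_square mult_ac)
  have "(\<integral>x. \<bar>f x * p x\<bar> \<partial>M) = (\<integral>x. \<bar>(sqrt (p x) * f x) * sqrt (p x)\<bar> \<partial>M)"
    by (simp only: sqrt_factor)
  also have "\<dots> \<le> sqrt (\<integral>x. p x * (f x)\<^sup>2 \<partial>M) * sqrt (\<integral>x. p x \<partial>M)"
    using Cauchy_Schwarz_integral[of "\<lambda>x. sqrt (p x) * f x" M "\<lambda>x. sqrt (p x)"] pf2 p_int
    by (simp add: sqrt_p)
  also have "\<dots> \<le> sqrt (\<integral>x. r x * (f x)\<^sup>2 \<partial>M) * sqrt (\<integral>x. p x \<partial>M)"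
    using p by (intro mult_right_mono real_sqrt_le_mono integral_mono[OF pf2 rf2 pf2_le]
        real_sqrt_ge_zero integral_nonneg_AE AE_I2)
  finally show ?thesis
    unfolding p_def .
qed

lemma (in prob_space) importance_sampling_abs_error_le:
  fixes r f :: "'a \<Rightarrow> real" and a :: real and n :: nat
  assumes "n > 0" "a > 0"
    and [measurable]: "r \<in> borel_measurable M" "f \<in> borel_measurable M"
    and r_nonneg: "\<And>x. r x \<ge> 0" and r: "integrable M r" and rf2: "integrable M (\<lambda>x. r x * (f x)\<^sup>2)"
  shows "(\<integral>\<omega>. \<bar>sample_mean n (\<lambda>x. f x * r x) \<omega> - (\<integral>x. f x * r x \<partial>M)\<bar> \<partial>PiM {..<n} (\<lambda>_. M))
      \<le> sqrt (\<integral>x. r x * (f x)\<^sup>2 \<partial>M) * (sqrt (a / n) + 2 * sqrt (\<integral>x. max (r x - a) 0 \<partial>M))"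
proof -
  define V where "V = (\<integral>x. r x * (f x)\<^sup>2 \<partial>M)"
  define K where "K = (\<integral>x. max (r x - a) 0 \<partial>M)"
  define g where "g = (\<lambda>x. f x * min (r x) a)"
  define e where "e = (\<lambda>x. f x * max (r x - a) 0)"
  have split: "(\<lambda>x. f x * r x) = (\<lambda>x. g x + e x)"
    by (auto simp: g_def e_def fun_eq_iff min_def max_def algebra_simps)
  have g2: "integrable M (\<lambda>x. (g x)\<^sup>2)" and g2_le: "(\<integral>x. (g x)\<^sup>2 \<partial>M) \<le> a * V"
    unfolding g_def V_def using \<open>a > 0\<close>
    by (auto intro!: integrable_truncated_square integral_truncated_square_le r_nonneg rf2)
  have g: "integrable M g"
    using g2 by (rule square_integrable_imp_integrable[rotated]) (simp add: g_def)
  have e: "integrable M e"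
    using Bochner_Integration.integrable_diff[OF integrable_mult_of_weighted_square[OF _ _ r_nonneg r rf2] g]
      split by (simp add: fun_eq_iff)
  have sqrt_split: "sqrt (a * V / n) = sqrt V * sqrt (a / n)"
    by (simp add: real_sqrt_mult[symmetric] mult.commute)
  have "(\<integral>\<omega>. \<bar>sample_mean n (\<lambda>x. f x * r x) \<omega> - (\<integral>x. f x * r x \<partial>M)\<bar> \<partial>PiM {..<n} (\<lambda>_. M))
      \<le> (\<integral>\<omega>. \<bar>sample_mean n g \<omega> - (\<integral>x. g x \<partial>M)\<bar> \<partial>PiM {..<n} (\<lambda>_. M)) + 2 * (\<integral>x. \<bar>e x\<bar> \<partial>M)"
    unfolding split by (rule integral_abs_sample_mean_deviation_add_le[OF \<open>n > 0\<close> g e])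
  also have "\<dots> \<le> sqrt ((\<integral>x. (g x)\<^sup>2 \<partial>M) / n) + 2 * (sqrt V * sqrt K)"
    using integral_abs_sample_mean_deviation_le[OF \<open>n > 0\<close> _ g2]
      integral_abs_mult_excess_le[OF _ _ r_nonneg _ r rf2, of a] \<open>a > 0\<close>
    unfolding e_def V_def K_def by (intro add_mono) (auto simp: g_def)
  also have "\<dots> \<le> sqrt (a * V / n) + 2 * (sqrt V * sqrt K)"
    using g2_le by (simp add: divide_right_mono)
  also have "\<dots> = sqrt V * (sqrt (a / n) + 2 * sqrt K)"
    using sqrt_split by (simp add: distrib_left)
  finally show ?thesis
    unfolding V_def K_def .
qed

lemma (in sigma_finite_measure) nn_integral_min_eq_tail:
  fixes r :: "'a \<Rightarrow> real" and a :: real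
  assumes [measurable]: "r \<in> borel_measurable M" and r_nonneg: "\<And>x. r x \<ge> 0" and "a \<ge> 0"
  shows "(\<integral>\<^sup>+x. ennreal (min (r x) a) \<partial>M)
      = (\<integral>\<^sup>+\<eta>. indicator {0..a} \<eta> * emeasure M {x \<in> space M. r x \<ge> \<eta>} \<partial>lborel)"
proof -
  define T where "T = {(x, \<eta>). 0 \<le> \<eta> \<and> \<eta> \<le> a \<and> \<eta> \<le> r x}"
  interpret pair_sigma_finite M lborel ..
  have "(\<integral>\<^sup>+x. ennreal (min (r x) a) \<partial>M) = (\<integral>\<^sup>+x. (\<integral>\<^sup>+\<eta>. indicator T (x, \<eta>) \<partial>lborel) \<partial>M)"
  proof (rule nn_integral_cong)
    fix x
    have "(\<lambda>\<eta>. indicator T (x, \<eta>) :: ennreal) = indicator {0..min (r x) a}"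
      by (auto simp: T_def indicator_def fun_eq_iff)
    then show "ennreal (min (r x) a) = (\<integral>\<^sup>+\<eta>. indicator T (x, \<eta>) \<partial>lborel)"
      using r_nonneg[of x] \<open>a \<ge> 0\<close> by simp
  qed
  also have "\<dots> = (\<integral>\<^sup>+\<eta>. (\<integral>\<^sup>+x. indicator T (x, \<eta>) \<partial>M) \<partial>lborel)"
    unfolding T_def by (rule Fubini'[symmetric]) measurable
  also have "\<dots> = (\<integral>\<^sup>+\<eta>. indicator {0..a} \<eta> * emeasure M {x \<in> space M. r x \<ge> \<eta>} \<partial>lborel)"
  proof (rule nn_integral_cong)
    fix \<eta> :: real
    have "(\<integral>\<^sup>+x. indicator T (x, \<eta>) \<partial>M)
        = (\<integral>\<^sup>+x. indicator {0..a} \<eta> * indicator {x \<in> space M. r x \<ge> \<eta>} x \<partial>M)"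
      by (rule nn_integral_cong) (auto simp: T_def indicator_def)
    then show "(\<integral>\<^sup>+x. indicator T (x, \<eta>) \<partial>M) = indicator {0..a} \<eta> * emeasure M {x \<in> space M. r x \<ge> \<eta>}"
      by (simp add: nn_integral_cmult_indicator)
  qed
  finally show ?thesis .
qed

lemma (in prob_space) integral_min_eq_interval_integral_tail:
  fixes r :: "'a \<Rightarrow> real" and a :: real
  assumes [measurable]: "r \<in> borel_measurable M" and r_nonneg: "\<And>x. r x \<ge> 0" and "a \<ge> 0"
  shows "(\<integral>x. min (r x) a \<partial>M) = (LBINT \<eta>=0..a. measure M {x \<in> space M. r x \<ge> \<eta>})"
proof -
  define w where "w \<eta> = measure M {x \<in> space M. r x \<ge> \<eta>}" for \<eta>
  have "mono (\<lambda>\<eta>. - w \<eta>)"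
    unfolding mono_def w_def by (auto intro!: finite_measure_mono)
  then have "(\<lambda>\<eta>. - (- w \<eta>)) \<in> borel_measurable borel"
    by (intro borel_measurable_uminus borel_measurable_mono)
  then have [measurable]: "w \<in> borel_measurable borel"
    by simp
  have w_bounds: "0 \<le> w \<eta>" "w \<eta> \<le> 1" for \<eta>
    unfolding w_def by simp_all
  have w_int: "integrable lborel (\<lambda>\<eta>. indicator {0..a} \<eta> * w \<eta>)"
  proof (rule Bochner_Integration.integrable_bound)
    show "integrable lborel (\<lambda>\<eta>. indicator {0..a} \<eta> :: real)"
      by (rule integrable_real_indicator) (use \<open>a \<ge> 0\<close> in auto)
    show "AE \<eta> in lborel. norm (indicator {0..a} \<eta> * w \<eta>) \<le> norm (indicator {0..a} \<eta> :: real)"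
      using w_bounds by (intro AE_I2) (auto simp: indicator_def)
  qed measurable
  have "ennreal (\<integral>x. min (r x) a \<partial>M) = (\<integral>\<^sup>+x. ennreal (min (r x) a) \<partial>M)"
    using r_nonneg \<open>a \<ge> 0\<close>
    by (intro nn_integral_eq_integral[symmetric] integrable_const_bound[where B = a]) auto
  also have "\<dots> = (\<integral>\<^sup>+\<eta>. indicator {0..a} \<eta> * emeasure M {x \<in> space M. r x \<ge> \<eta>} \<partial>lborel)"
    by (rule nn_integral_min_eq_tail) (use r_nonneg \<open>a \<ge> 0\<close> in auto)
  also have "\<dots> = (\<integral>\<^sup>+\<eta>. ennreal (indicator {0..a} \<eta> * w \<eta>) \<partial>lborel)"
    by (intro nn_integral_cong) (auto simp: w_def emeasure_eq_measure indicator_def)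
  also have "\<dots> = ennreal (\<integral>\<eta>. indicator {0..a} \<eta> * w \<eta> \<partial>lborel)"
    using w_int w_bounds by (intro nn_integral_eq_integral) (auto simp: indicator_def)
  finally have "(\<integral>x. min (r x) a \<partial>M) = (\<integral>\<eta>. indicator {0..a} \<eta> * w \<eta> \<partial>lborel)"
    using w_bounds \<open>a \<ge> 0\<close> r_nonneg
    by (subst (asm) ennreal_inj) (auto intro!: integral_nonneg_AE simp: indicator_def)
  also have "\<dots> = (LBINT \<eta>=0..a. w \<eta>)"
    using interval_integral_Icc[of 0 a w] \<open>a \<ge> 0\<close>
    by (simp add: zero_ereal_def set_lebesgue_integral_def)
  finally show ?thesis
    unfolding w_def .
qed

lemma (in sigma_finite_measure)
  fixes f :: "'a \<Rightarrow> real"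
  assumes "sigma_finite_measure N" "absolutely_continuous M N" "sets N = sets M"
    and "f \<in> borel_measurable M"
  shows integrable_rdens_iff: "integrable N f \<longleftrightarrow> integrable M (\<lambda>x. rdens M N x * f x)"
    and integral_rdens: "(\<integral>x. f x \<partial>N) = (\<integral>x. rdens M N x * f x \<partial>M)"
  using RN_deriv_integrable[OF assms] RN_deriv_integral[OF assms] by (simp_all add: rdens_def)

lemma (in prob_space) SP_eq_integral_excess:
  assumes "prob_space Q" "absolutely_continuous M Q" "sets Q = sets M" "a \<ge> 0"
  shows "SP M Q a = (\<integral>x. max (rdens M Q x - a) 0 \<partial>M)"
proof -
  interpret Q: prob_space Q by fact
  have Q: "sigma_finite_measure Q" ..
  have [measurable]: "rdens M Q \<in> borel_measurable M"
    unfolding rdens_def by measurable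
  have r: "integrable M (rdens M Q)"
    using integrable_rdens_iff[OF Q assms(2,3), of "\<lambda>_. 1"] by simp
  have r_total: "(\<integral>x. rdens M Q x \<partial>M) = 1"
    using integral_rdens[OF Q assms(2,3), of "\<lambda>_. 1"] by (simp add: Q.prob_space)
  have min_int: "integrable M (\<lambda>x. min (rdens M Q x) a)"
    using \<open>a \<ge> 0\<close> by (intro integrable_const_bound[where B = a]) (auto simp: rdens_def)
  have "(\<integral>x. max (rdens M Q x - a) 0 \<partial>M) = (\<integral>x. rdens M Q x - min (rdens M Q x) a \<partial>M)"
    by (rule Bochner_Integration.integral_cong) (auto simp: max_def min_def)
  also have "\<dots> = 1 - (LBINT \<eta>=0..a. measure M {x \<in> space M. rdens M Q x \<ge> \<eta>})"
    using r min_int r_total \<open>a \<ge> 0\<close>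
    by (simp add: integral_min_eq_interval_integral_tail rdens_def)
  finally show ?thesis
    by (simp add: SP_def WP_def wP_def)
qed

lemma (in prob_space) importance_sampling_rdens_error_le:
  fixes f :: "'a \<Rightarrow> real" and a :: real and n :: nat
  assumes Q: "prob_space Q" "absolutely_continuous M Q" "sets Q = sets M"
    and "n > 0" "a > 0" and [measurable]: "f \<in> borel_measurable M"
    and f2: "integrable Q (\<lambda>x. (f x)\<^sup>2)"
  shows "(\<integral>\<^sup>+\<omega>. ennreal \<bar>sample_mean n (\<lambda>x. f x * rdens M Q x) \<omega> - (\<integral>x. f x \<partial>Q)\<bar> \<partial>PiM {..<n} (\<lambda>_. M))
      \<le> ennreal (sqrt (\<integral>x. (f x)\<^sup>2 \<partial>Q) * (sqrt (a / n) + 2 * sqrt (SP M Q a)))"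
proof -
  interpret Q: prob_space Q by fact
  have sigma_finite_Q: "sigma_finite_measure Q" ..
  note rdens = integrable_rdens_iff[OF sigma_finite_Q Q(2,3)] integral_rdens[OF sigma_finite_Q Q(2,3)]
  have r_measurable [measurable]: "rdens M Q \<in> borel_measurable M"
    by (simp add: rdens_def)
  have r_nonneg: "rdens M Q x \<ge> 0" for x
    by (simp add: rdens_def)
  have f: "integrable Q f"
    using f2 by (rule Q.square_integrable_imp_integrable[rotated]) (simp add: measurable_cong_sets[OF Q(3) refl])
  have r: "integrable M (rdens M Q)"
    using rdens(1)[of "\<lambda>_. 1"] by simp
  have rf2: "integrable M (\<lambda>x. rdens M Q x * (f x)\<^sup>2)"
    using rdens(1)[of "\<lambda>x. (f x)\<^sup>2"] f2 by simp
  have fr: "integrable M (\<lambda>x. f x * rdens M Q x)"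
    using rdens(1)[of f] f by (simp add: mult.commute)
  have "(\<integral>x. f x \<partial>Q) = (\<integral>x. f x * rdens M Q x \<partial>M)"
    using rdens(2)[of f] by (simp add: mult.commute)
  moreover have "(\<integral>\<omega>. \<bar>sample_mean n (\<lambda>x. f x * rdens M Q x) \<omega> - (\<integral>x. f x * rdens M Q x \<partial>M)\<bar> \<partial>PiM {..<n} (\<lambda>_. M))
      \<le> sqrt (\<integral>x. (f x)\<^sup>2 \<partial>Q) * (sqrt (a / n) + 2 * sqrt (SP M Q a))"
    using importance_sampling_abs_error_le[OF \<open>n > 0\<close> \<open>a > 0\<close> r_measurable _ r_nonneg r rf2]
      rdens(2)[of "\<lambda>x. (f x)\<^sup>2"] SP_eq_integral_excess[OF Q, of a] \<open>a > 0\<close>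
    by simp
  ultimately show ?thesis
    using integrable_abs_sample_mean_deviation[OF fr]
    by (subst nn_integral_eq_integral) (auto intro: ennreal_leI)
qed

theorem theorem3:
  fixes P Q :: "'a::polish_space measure"
    and \<phi> :: "'a \<Rightarrow> real" and t :: real and n :: nat
  assumes "prob_space P" and "prob_space Q"
    and "sets P = sets borel" and "sets Q = sets borel"
    and "absolutely_continuous P Q"
    and "integrable Q (entropy_density 2 P Q)"
    and "\<phi> \<in> borel_measurable borel"
    and "integrable Q (\<lambda>x. (\<phi> x)\<^sup>2)"
    and "t \<ge> 0" and "n > 0"
    and "real n = 2 powr (KL_divergence 2 P Q + t)"
  shows "(\<integral>\<^sup>+ \<omega>. ennreal \<bar>(1 / real n) * (\<Sum>i<n. \<phi> (\<omega> i) * rdens P Q (\<omega> i))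
              - (\<integral>x. \<phi> x \<partial>Q)\<bar> \<partial>(PiM {..<n} (\<lambda>_. P)))
         \<le> ennreal (sqrt (\<integral>x. (\<phi> x)\<^sup>2 \<partial>Q) *
              (2 powr (- t / 4) + 2 * sqrt (SP P Q (2 powr (KL_divergence 2 P Q + t / 2)))))"
proof -
  interpret P: prob_space P by fact
  define a where "a = 2 powr (KL_divergence 2 P Q + t / 2)"
  have "sqrt (a / n) = 2 powr (- t / 4)"
    by (simp add: a_def assms(11) powr_diff[symmetric] powr_half_sqrt[symmetric] powr_powr)
  moreover have "(1 / real n) * (\<Sum>i<n. \<phi> (\<omega> i) * rdens P Q (\<omega> i))
      = sample_mean n (\<lambda>x. \<phi> x * rdens P Q x) \<omega>" for \<omega>
    by (simp add: sample_mean_def)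
  moreover have "\<phi> \<in> borel_measurable P" and "sets Q = sets P"
    using assms(3,4,7) by simp_all
  ultimately show ?thesis
    using P.importance_sampling_rdens_error_le[OF assms(2,5) _ \<open>n > 0\<close>, of a \<phi>] assms(8)
    by (simp add: a_def)
qed

end
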